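(* Let $\mathcal{M}$ be a $*$-algebra with a state $\rho$, and let $A_1,\ldots,A_k\in\mathcal{M}$ be self-adjoint elements with $\rho(A_a)=0$ for all $a$. Suppose that $\rho(A_aA_b)=\rho(A_bA_a)$ for all $a,b$. Let $p\in\mathbb{C}\langle A_1,\ldots,A_k\rangle$ be a non-commutative polynomial and let $\hat p\in\mathbb{C}[A_1,\ldots,A_k]$ be its commutative image. Then for every integer $n\ge 0$, $$\lim_{N\to\infty}\gamma_n\bigl(p(\tilde A_1,\ldots,\tilde A_k)\bigr)=\gamma_n\bigl(\hat p(X_1,\ldots,X_k)\bigr),$$ where the left-hand moment is computed in $(\mathcal{M}^{\otimes N},\rho^{\otimes N})$, and $X_1,\ldots,X_k$ are classical centered jointly Gaussian real random variables with covariance $E[X_aX_b]=\rho(A_aA_b)$, the right-hand moment being $E[\hat p(X_1,\ldots,X_k)^n]$.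
   Context: A $*$-algebra is a unital complex algebra with an anti-linear anti-involution $*$. A state $\rho$ on a $*$-algebra is a $*$-invariant linear functional with $\rho(I)=1$ and $\rho(A^2)\ge0$ for every self-adjoint $A$. For $A\in\mathcal{M}$ and $1\le t\le N$, let $A^{(t)}=I^{\otimes(t-1)}\otimes A\otimes I^{\otimes(N-t)}\in\mathcal{M}^{\otimes N}$, and set $\tilde A=\frac1{\sqrt N}\sum_{t=1}^N A^{(t)}$. The product state $\rho^{\otimes N}$ on $\mathcal{M}^{\otimes N}$ is defined by $\rho^{\otimes N}(B_1\otimes\cdots\otimes B_N)=\prod_t\rho(B_t)$. For an element $B$ of a $*$-algebra with state $\omega$, the $n$th moment is $\gamma_n(B)=\omega(B^n)$ (defined whether or not $B$ is self-adjoint). The commutative image $\hat p$ of a non-commutative polynomial is obtained by letting the variables commute. *)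

theory Defs
  imports "HOL-Probability.Probability" "HOL-Library.Poly_Mapping" "HOL-Library.Multiset"
begin

text \<open>A unital complex *-algebra: the ring structure comes from the type class ring_1,
  the complex scalar multiplication is sm, the involution is st.\<close>

locale star_algebra =
  fixes sm :: "complex \<Rightarrow> 'a::ring_1 \<Rightarrow> 'a"
    and st :: "'a \<Rightarrow> 'a"
  assumes sm_add_right: "sm c (x + y) = sm c x + sm c y"
    and sm_add_left: "sm (c + d) x = sm c x + sm d x"
    and sm_sm: "sm c (sm d x) = sm (c * d) x"
    and sm_one: "sm 1 x = x"
    and sm_mult_left: "sm c (x * y) = sm c x * y"
    and sm_mult_right: "sm c (x * y) = x * sm c y"
    and st_add: "st (x + y) = st x + st y"
    and st_sm: "st (sm c x) = sm (cnj c) (st x)"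
    and st_mult: "st (x * y) = st y * st x"
    and st_st: "st (st x) = x"

definition is_state :: "(complex \<Rightarrow> 'a::ring_1 \<Rightarrow> 'a) \<Rightarrow> ('a \<Rightarrow> 'a) \<Rightarrow> ('a \<Rightarrow> complex) \<Rightarrow> bool" where
  "is_state sm st \<rho> \<longleftrightarrow>
     (\<forall>x y. \<rho> (x + y) = \<rho> x + \<rho> y) \<and>
     (\<forall>c x. \<rho> (sm c x) = c * \<rho> x) \<and>
     (\<forall>x. \<rho> (st x) = cnj (\<rho> x)) \<and>
     \<rho> 1 = 1 \<and>
     (\<forall>A. st A = A \<longrightarrow> Im (\<rho> (A * A)) = 0 \<and> Re (\<rho> (A * A)) \<ge> 0)"

text \<open>An element of the tensor power is represented by a finitely supported function
  from N-tuples (lists of length N) of elements of M to complex coefficients, i.e. the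
  formal linear combination of the elementary tensors B_1 \<otimes> ... \<otimes> B_N.
  The product state is defined on elementary tensors by the product formula and
  extended linearly.  (This is the free vector space on M^N, which maps onto the
  algebraic tensor product as an algebra; the product state factors through it.)\<close>

type_synonym 'a tensor = "'a list \<Rightarrow> complex"

definition tbasis :: "'a list \<Rightarrow> 'a tensor" where
  "tbasis e = (\<lambda>e'. if e' = e then 1 else 0)"

definition tunit :: "nat \<Rightarrow> ('a::ring_1) tensor" where
  "tunit N = tbasis (replicate N 1)"

definition tscale :: "complex \<Rightarrow> 'a tensor \<Rightarrow> 'a tensor" where
  "tscale c x = (\<lambda>e. c * x e)"

definition tmul :: "('a::ring_1) tensor \<Rightarrow> 'a tensor \<Rightarrow> 'a tensor" where
  "tmul x y = (\<lambda>e. \<Sum>(e1, e2) \<in> {(e1, e2). x e1 \<noteq> 0 \<and> y e2 \<noteq> 0 \<and> map2 (*) e1 e2 = e}.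
                     x e1 * y e2)"

definition tpow :: "nat \<Rightarrow> ('a::ring_1) tensor \<Rightarrow> nat \<Rightarrow> 'a tensor" where
  "tpow N x n = (tmul x ^^ n) (tunit N)"

definition tprod_list :: "nat \<Rightarrow> ('a::ring_1) tensor list \<Rightarrow> 'a tensor" where
  "tprod_list N xs = foldr tmul xs (tunit N)"

text \<open>A^{(t)} (here with 0-based position t < N).\<close>
definition tembed :: "nat \<Rightarrow> nat \<Rightarrow> 'a::ring_1 \<Rightarrow> 'a tensor" where
  "tembed N t A = tbasis ((replicate N 1)[t := A])"

definition ttilde :: "nat \<Rightarrow> 'a::ring_1 \<Rightarrow> 'a tensor" where
  "ttilde N A = tscale (complex_of_real (1 / sqrt (real N))) (\<lambda>e. \<Sum>t<N. tembed N t A e)"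

definition tstate :: "('a \<Rightarrow> complex) \<Rightarrow> 'a tensor \<Rightarrow> complex" where
  "tstate \<rho> x = (\<Sum>e \<in> {e. x e \<noteq> 0}. x e * prod_list (map \<rho> e))"

text \<open>A non-commutative polynomial in variables indexed by nat: a finitely supported map
  from words (lists of variable indices) to complex coefficients.\<close>

type_synonym ncpoly = "nat list \<Rightarrow>\<^sub>0 complex"

definition teval :: "nat \<Rightarrow> ncpoly \<Rightarrow> (nat \<Rightarrow> ('a::ring_1) tensor) \<Rightarrow> 'a tensor" where
  "teval N p B = (\<lambda>e. \<Sum>w \<in> Poly_Mapping.keys p. Poly_Mapping.lookup p w * tprod_list N (map B w) e)"

text \<open>Commutative image: monomials are multisets of variables.\<close>
definition comm_image :: "ncpoly \<Rightarrow> nat multiset \<Rightarrow> complex" where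
  "comm_image p m = (\<Sum>w \<in> {w \<in> Poly_Mapping.keys p. mset w = m}. Poly_Mapping.lookup p w)"

definition ceval :: "(nat multiset \<Rightarrow> complex) \<Rightarrow> (nat \<Rightarrow> complex) \<Rightarrow> complex" where
  "ceval q X = (\<Sum>m \<in> {m. q m \<noteq> 0}. q m * (\<Prod>a \<in># m. X a))"

text \<open>A real random variable is centered Gaussian if it is a.s. 0 (degenerate variance)
  or has the normal law N(0, sigma^2) with sigma > 0.\<close>
definition centered_gaussian :: "'b measure \<Rightarrow> ('b \<Rightarrow> real) \<Rightarrow> bool" where
  "centered_gaussian M Y \<longleftrightarrow>
     Y \<in> borel_measurable M \<and>
     ((AE x in M. Y x = 0) \<or> (\<exists>\<sigma>>0. distributed M lborel Y (normal_density 0 \<sigma>)))"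

definition jointly_centered_gaussian :: "'b measure \<Rightarrow> nat \<Rightarrow> (nat \<Rightarrow> 'b \<Rightarrow> real) \<Rightarrow> bool" where
  "jointly_centered_gaussian M k X \<longleftrightarrow>
     (\<forall>t :: nat \<Rightarrow> real. centered_gaussian M (\<lambda>x. \<Sum>a<k. t a * X a x))"

end

(* Expanding the product state of a word in the normalized sums N^(-1/2) (A^(1) + ... + A^(N)),
   every letter is placed into one of the N tensor slots.  Summed over all placements this is a
   polynomial in N, and since a slot holding a single centered letter contributes 0, its degree is
   at most half the length m of the word; hence N^(-m/2) times it converges to the top coefficient
   clt_moment.  If rho(ab) = rho(ba), the top coefficient is symmetric in the letters (swapping two
   neighbours produces a word with one letter less), it is multilinear, and on B^m it equals
   (m-1)!! rho(B^2)^(m/2), the m-th moment of a centered Gaussian of variance rho(B^2).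
   Polarization, m! x_1 ... x_m = sum over T of (-1)^(m-|T|) (sum of x_i over i in T)^m, reduces
   mixed moments to such pure powers, on the algebra side as well as for the jointly Gaussian
   X_a, and so identifies the limit with E[p^(X_1, ..., X_k)^n]. *)

theory Submission
  imports Defs
begin

section \<open>Placing letters into tensor slots\<close>

text \<open>\<open>slot_sum\<close> runs over all ways of multiplying each letter of \<open>bs\<close> from the right onto one
  of \<open>N\<close> slots; this is how the product state sees a product of the sums \<open>\<Sum>t<N. A\<^sup>(\<^sup>t\<^sup>)\<close>
  (see \<open>tstate_left_tmul_tprod_list\<close>).\<close>

primrec slot_sum :: "nat \<Rightarrow> 'a::ring_1 list \<Rightarrow> (nat \<Rightarrow> 'a) \<Rightarrow> ((nat \<Rightarrow> 'a) \<Rightarrow> complex) \<Rightarrow> complex"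
where
  "slot_sum N [] z K = K z"
| "slot_sum N (b # bs) z K = (\<Sum>t<N. slot_sum N bs (z(t := z t * b)) K)"

definition slot_moment :: "('a::ring_1 \<Rightarrow> complex) \<Rightarrow> nat \<Rightarrow> 'a list \<Rightarrow> (nat \<Rightarrow> 'a) \<Rightarrow> complex"
  where "slot_moment \<rho> N bs z = slot_sum N bs z (\<lambda>z'. \<Prod>t<N. \<rho> (z' t))"

lemma slot_sum_append:
  "slot_sum N (bs @ cs) z K = slot_sum N bs z (\<lambda>z'. slot_sum N cs z' K)"
  by (induction bs arbitrary: z) auto

lemma slot_sum_sum_right:
  assumes "finite I"
  shows "slot_sum N bs z (\<lambda>z'. \<Sum>i\<in>I. c i * K i z') = (\<Sum>i\<in>I. c i * slot_sum N bs z (K i))"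
proof (induction bs arbitrary: z)
  case (Cons b bs)
  have "slot_sum N (b # bs) z (\<lambda>z'. \<Sum>i\<in>I. c i * K i z') =
    (\<Sum>t<N. \<Sum>i\<in>I. c i * slot_sum N bs (z(t := z t * b)) (K i))"
    by (simp only: slot_sum.simps Cons.IH)
  also have "\<dots> = (\<Sum>i\<in>I. c i * slot_sum N (b # bs) z (K i))"
    by (simp only: slot_sum.simps sum_distrib_left) (rule sum.swap)
  finally show ?case .
qed simp

lemma slot_moment_Cons:
  "slot_moment \<rho> N (b # bs) z = (\<Sum>t<N. slot_moment \<rho> N bs (z(t := z t * b)))"
  by (simp add: slot_moment_def)

lemma slot_moment_permute:
  assumes "\<sigma> permutes {..<N}"
  shows "slot_moment \<rho> N bs (z \<circ> \<sigma>) = slot_moment \<rho> N bs z"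
proof (induction bs arbitrary: z)
  case Nil
  show ?case
    using prod.permute[OF assms, of "\<lambda>t. \<rho> (z t)"] by (simp add: slot_moment_def comp_def)
next
  case (Cons b bs)
  have inj: "inj \<sigma>"
    using assms by (rule permutes_inj)
  have "(z \<circ> \<sigma>)(t := (z \<circ> \<sigma>) t * b) = (z(\<sigma> t := z (\<sigma> t) * b)) \<circ> \<sigma>" for t
    using inj by (auto simp: fun_eq_iff inj_eq)
  then have "slot_moment \<rho> N (b # bs) (z \<circ> \<sigma>) = (\<Sum>t<N. slot_moment \<rho> N bs (z(\<sigma> t := z (\<sigma> t) * b)))"
    by (simp only: slot_moment_Cons Cons.IH)
  also have "\<dots> = slot_moment \<rho> N (b # bs) z"
    using sum.permute[OF assms, of "\<lambda>t. slot_moment \<rho> N bs (z(t := z t * b))"]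
    by (simp add: slot_moment_Cons comp_def)
  finally show ?case .
qed

locale unital_additive =
  fixes \<rho> :: "'a::ring_1 \<Rightarrow> complex"
  assumes additive: "\<rho> (x + y) = \<rho> x + \<rho> y"
    and unital: "\<rho> 1 = 1"
begin

lemma map_0 [simp]: "\<rho> 0 = 0"
  using additive[of 0 0] by simp

lemma map_diff: "\<rho> (x - y) = \<rho> x - \<rho> y"
  using additive[of "x - y" y] by simp

lemma map_sum: "\<rho> (sum f S) = (\<Sum>i\<in>S. \<rho> (f i))"
  by (induction S rule: infinite_finite_induct) (auto simp: additive)

lemma slot_moment_slot_add:
  assumes "t < N"
  shows "slot_moment \<rho> N bs (z(t := x + y)) =
    slot_moment \<rho> N bs (z(t := x)) + slot_moment \<rho> N bs (z(t := y))"
proof (induction bs arbitrary: z x y)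
  case Nil
  have "(\<Prod>t'<N. \<rho> ((z(t := w)) t')) = \<rho> w * (\<Prod>t'\<in>{..<N} - {t}. \<rho> (z t'))" for w
    using assms by (simp add: prod.remove[of _ t])
  then show ?case
    by (simp add: slot_moment_def additive distrib_right)
next
  case (Cons b bs)
  have "slot_moment \<rho> N bs ((z(t := x + y))(t' := (z(t := x + y)) t' * b)) =
    slot_moment \<rho> N bs ((z(t := x))(t' := (z(t := x)) t' * b)) +
    slot_moment \<rho> N bs ((z(t := y))(t' := (z(t := y)) t' * b))" for t'
  proof (cases "t' = t")
    case True
    then have "(z(t := u))(t' := (z(t := u)) t' * b) = z(t := u * b)" for u
      by simp
    then show ?thesis
      using Cons.IH[of z "x * b" "y * b"] by (simp only: distrib_right)
  next
    case False
    then have "(z(t := u))(t' := (z(t := u)) t' * b) = (z(t' := z t' * b))(t := u)" for u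
      by (simp add: fun_upd_twist)
    then show ?thesis
      using Cons.IH[of "z(t' := z t' * b)" x y] by (simp only:)
  qed
  then show ?case
    by (simp only: slot_moment_Cons sum.distrib)
qed

lemma slot_moment_slot_diff:
  assumes "t < N"
  shows "slot_moment \<rho> N bs (z(t := x - y)) =
    slot_moment \<rho> N bs (z(t := x)) - slot_moment \<rho> N bs (z(t := y))"
  using slot_moment_slot_add[OF assms, of bs z "x - y" y] by simp

lemma slot_moment_letter_add:
  "slot_moment \<rho> N (v @ (x + y) # w) z =
    slot_moment \<rho> N (v @ x # w) z + slot_moment \<rho> N (v @ y # w) z"
proof (induction v arbitrary: z)
  case Nil
  show ?case
    using slot_moment_slot_add
    by (simp add: slot_moment_Cons distrib_left sum.distrib)
next
  case (Cons c v)
  show ?case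
    unfolding append_Cons slot_moment_Cons Cons.IH by (rule sum.distrib)
qed

lemma slot_moment_letter_sum:
  assumes "finite S"
  shows "slot_moment \<rho> N (v @ sum a S # w) z = (\<Sum>i\<in>S. slot_moment \<rho> N (v @ a i # w) z)"
  using assms
proof (induction S rule: finite_induct)
  case empty
  show ?case
    using slot_moment_letter_add[of N v 0 0 w z] by simp
next
  case (insert i S)
  then show ?case
    by (simp add: slot_moment_letter_add)
qed

text \<open>Two adjacent letters placed into different slots commute; only the placements into a
  common slot survive in the difference.\<close>

lemma slot_moment_swap:
  "slot_moment \<rho> N (v @ a # b # w) z - slot_moment \<rho> N (v @ b # a # w) z =
    slot_moment \<rho> N (v @ (a * b - b * a) # w) z"
proof (induction v arbitrary: z)
  case Nil
  define f where "f a b t t' = slot_moment \<rho> N w ((z(t := z t * a))(t' := (z(t := z t * a)) t' * b))"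
    for a b t t'
  have off_diagonal: "f a b t t' = f b a t' t" if "t \<noteq> t'" for t t'
    using that by (simp add: f_def fun_upd_twist)
  have "slot_moment \<rho> N (a # b # w) z - slot_moment \<rho> N (b # a # w) z =
    (\<Sum>t<N. \<Sum>t'<N. f a b t t') - (\<Sum>t'<N. \<Sum>t<N. f b a t' t)"
    by (simp only: slot_moment_Cons f_def)
  also have "\<dots> = (\<Sum>t<N. \<Sum>t'<N. f a b t t' - f b a t' t)"
    by (subst (2) sum.swap) (simp only: sum_subtractf)
  also have "\<dots> = (\<Sum>t<N. \<Sum>t'<N. if t = t' then f a b t t - f b a t t else 0)"
    by (intro sum.cong refl) (simp add: off_diagonal)
  also have "\<dots> = (\<Sum>t<N. slot_moment \<rho> N w (z(t := z t * (a * b - b * a))))"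
    using slot_moment_slot_diff[of _ N w z]
    by (simp add: f_def right_diff_distrib mult.assoc)
  also have "\<dots> = slot_moment \<rho> N ((a * b - b * a) # w) z"
    by (simp only: slot_moment_Cons)
  finally show ?case
    by simp
next
  case (Cons c v)
  show ?case
    unfolding append_Cons slot_moment_Cons sum_subtractf[symmetric] Cons.IH ..
qed

end

section \<open>Words and polarization\<close>

definition words :: "'i set \<Rightarrow> nat \<Rightarrow> 'i list set"
  where "words S m = {g. set g \<subseteq> S \<and> length g = m}"

lemma finite_words [simp]: "finite S \<Longrightarrow> finite (words S m)"
  by (simp add: words_def finite_lists_length_eq)

lemma words_0 [simp]: "words S 0 = {[]}"
  by (auto simp: words_def)

lemma sum_words_Suc:
  assumes "finite S"
  shows "(\<Sum>g\<in>words S (Suc m). f g) = (\<Sum>i\<in>S. \<Sum>g\<in>words S m. f (i # g))"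
proof -
  have "words S (Suc m) = (\<lambda>(i, g). i # g) ` (S \<times> words S m)"
    by (auto simp: words_def length_Suc_conv image_iff)
  moreover have "inj_on (\<lambda>(i, g). i # g) (S \<times> words S m)"
    by (auto intro: inj_onI)
  ultimately show ?thesis
    using assms by (simp add: sum.reindex sum.cartesian_product prod.case_distrib)
qed

lemma power_sum_eq_sum_words:
  fixes f :: "'i \<Rightarrow> 'c::comm_semiring_1"
  assumes "finite S"
  shows "(\<Sum>i\<in>S. f i) ^ m = (\<Sum>g\<in>words S m. prod_list (map f g))"
proof (induction m)
  case (Suc m)
  then show ?case
    using assms by (simp add: sum_words_Suc sum_distrib_left sum_distrib_right) (rule sum.swap)
qed simp

lemma sum_Pow_words_inclusion_exclusion:
  fixes \<phi> :: "'i list \<Rightarrow> 'c::comm_ring_1"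
  assumes "finite I"
  shows "(\<Sum>T\<in>Pow I. (-1) ^ (card I - card T) * (\<Sum>g\<in>words T m. \<phi> g)) =
    (\<Sum>g | g \<in> words I m \<and> set g = I. \<phi> g)"
proof -
  have "(\<Sum>g\<in>words S m. \<phi> g) = (\<Sum>U\<in>Pow S. \<Sum>g | g \<in> words U m \<and> set g = U. \<phi> g)"
    if "finite S" for S
  proof -
    have "(\<Sum>g\<in>words S m. \<phi> g) = (\<Sum>U\<in>Pow S. \<Sum>g | g \<in> words S m \<and> set g = U. \<phi> g)"
      using that by (intro sum.group[symmetric]) (auto simp: words_def finite_lists_length_eq)
    also have "\<dots> = (\<Sum>U\<in>Pow S. \<Sum>g | g \<in> words U m \<and> set g = U. \<phi> g)"
      by (intro sum.cong refl) (auto simp: words_def)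
    finally show ?thesis .
  qed
  then show ?thesis
    using inclusion_exclusion_mobius[where f = "\<lambda>U. \<Sum>g | g \<in> words U m \<and> set g = U. \<phi> g"
        and g = "\<lambda>S. \<Sum>g\<in>words S m. \<phi> g", OF _ assms]
    by simp
qed

lemma words_surjective_eq_permutations_of_set:
  assumes "finite I"
  shows "{g. g \<in> words I (card I) \<and> set g = I} = permutations_of_set I"
  using assms by (auto simp: words_def permutations_of_set_def distinct_card intro!: card_distinct)

text \<open>Polarization: in the inclusion-exclusion sum over \<open>T \<subseteq> {..<m}\<close> of the words in \<open>T\<close> of
  length \<open>m\<close>, only the \<open>m!\<close> permutations of \<open>{..<m}\<close> survive.\<close>

lemma polarization:
  fixes \<phi> :: "nat list \<Rightarrow> 'c::comm_ring_1"
  assumes "\<And>g. g \<in> permutations_of_set {..<m} \<Longrightarrow> \<phi> g = c"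
  shows "(\<Sum>T\<in>Pow {..<m}. (-1) ^ (m - card T) * (\<Sum>g\<in>words T m. \<phi> g)) = of_nat (fact m) * c"
proof -
  have "(\<Sum>T\<in>Pow {..<m}. (-1) ^ (m - card T) * (\<Sum>g\<in>words T m. \<phi> g)) =
      (\<Sum>g\<in>permutations_of_set {..<m}. \<phi> g)"
    using sum_Pow_words_inclusion_exclusion[of "{..<m}" \<phi> m]
      words_surjective_eq_permutations_of_set[of "{..<m}"]
    by simp
  also have "\<dots> = of_nat (fact m) * c"
    by (simp add: assms)
  finally show ?thesis .
qed

lemma polarization_prod:
  fixes y :: "nat \<Rightarrow> 'c::comm_ring_1"
  shows "(\<Sum>T\<in>Pow {..<m}. (-1) ^ (m - card T) * (\<Sum>i\<in>T. y i) ^ m) = of_nat (fact m) * (\<Prod>i<m. y i)"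
proof -
  have "(\<Sum>i\<in>T. y i) ^ m = (\<Sum>g\<in>words T m. prod_list (map y g))" if "T \<in> Pow {..<m}" for T
    using that finite_subset by (intro power_sum_eq_sum_words) blast
  moreover have "prod_list (map y g) = (\<Prod>i<m. y i)" if "g \<in> permutations_of_set {..<m}" for g
    using that by (auto simp: permutations_of_set_def simp flip: prod.distinct_set_conv_list)
  ultimately show ?thesis
    by (simp add: polarization)
qed

section \<open>Dependence on the number of slots\<close>

text \<open>A configuration of slots: the occupied slots in order, each with its contents and a
  flag telling whether it holds exactly one letter so far; all remaining slots hold \<open>1\<close>.\<close>

definition slot_contents :: "('a::ring_1 \<times> bool) list \<Rightarrow> nat \<Rightarrow> 'a"
  where "slot_contents zs t = (if t < length zs then fst (zs ! t) else 1)"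

definition fill_slot :: "('a::ring_1 \<times> bool) list \<Rightarrow> nat \<Rightarrow> 'a \<Rightarrow> ('a \<times> bool) list"
  where "fill_slot zs j b = zs[j := (fst (zs ! j) * b, False)]"

definition singletons :: "('a \<times> bool) list \<Rightarrow> nat"
  where "singletons zs = length (filter snd zs)"

lemma length_fill_slot [simp]: "length (fill_slot zs j b) = length zs"
  by (simp add: fill_slot_def)

lemma singletons_append_True [simp]: "singletons (zs @ [(b, True)]) = Suc (singletons zs)"
  by (simp add: singletons_def)

lemma singletons_fill_slot:
  "j < length zs \<Longrightarrow> singletons (fill_slot zs j b) + (if snd (zs ! j) then 1 else 0) = singletons zs"
proof (induction zs arbitrary: j)
  case (Cons x zs)
  then show ?case
    by (cases j) (auto simp: singletons_def fill_slot_def)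
qed simp

lemma card_singleton_slots: "card {j. j < length zs \<and> snd (zs ! j)} = singletons zs"
  by (simp add: singletons_def length_filter_conv_card)

text \<open>Evaluated at \<open>r\<close>, \<open>moment_poly \<rho> bs zs\<close> is the slot moment with \<open>r\<close> further empty
  slots.  The next letter enters an occupied slot or one of the \<open>r\<close> empty ones; the latter are
  interchangeable, which gives the term \<open>r * P (r - 1)\<close>.\<close>

primrec moment_poly :: "('a::ring_1 \<Rightarrow> complex) \<Rightarrow> 'a list \<Rightarrow> ('a \<times> bool) list \<Rightarrow> complex poly"
where
  "moment_poly \<rho> [] zs = [:\<Prod>j<length zs. \<rho> (fst (zs ! j)):]"
| "moment_poly \<rho> (b # bs) zs = (\<Sum>j<length zs. moment_poly \<rho> bs (fill_slot zs j b)) +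
     pCons 0 (pcompose (moment_poly \<rho> bs (zs @ [(b, True)])) [:-1, 1:])"

lemma degree_pcompose_shift:
  fixes p :: "'a::idom poly"
  shows "degree (pcompose p [:a, 1:]) = degree p"
  by (simp add: degree_pcompose)

lemma coeff_pcompose_shift_degree:
  fixes p :: "'a::idom poly"
  assumes "degree p \<le> d"
  shows "coeff (pcompose p [:a, 1:]) d = coeff p d"
proof (cases "degree p = d")
  case True
  then show ?thesis
    using lead_coeff_comp[of "[:a, 1:]" p] by (simp add: degree_pcompose_shift)
next
  case False
  then show ?thesis
    using assms by (simp add: coeff_eq_0 degree_pcompose_shift)
qed

lemma coeff_pcompose_shift_eq_0:
  fixes p :: "'a::idom poly"
  assumes "\<And>j. i \<le> j \<Longrightarrow> coeff p j = 0"
  shows "coeff (pcompose p [:a, 1:]) i = 0"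
proof (cases "p = 0")
  case False
  then have "degree p < i"
    using assms leading_coeff_neq_0 not_less by blast
  then show ?thesis
    by (simp add: coeff_eq_0 degree_pcompose_shift)
qed simp

lemma slot_moment_Cons_slot_contents:
  assumes "length zs \<le> N"
  shows "slot_moment \<rho> N (b # bs) (slot_contents zs) =
    (\<Sum>j<length zs. slot_moment \<rho> N bs (slot_contents (fill_slot zs j b))) +
    of_nat (N - length zs) * slot_moment \<rho> N bs (slot_contents (zs @ [(b, True)]))"
proof -
  define n where "n = length zs"
  have occupied: "(slot_contents zs)(j := slot_contents zs j * b) = slot_contents (fill_slot zs j b)"
    if "j < n" for j
    using that by (auto simp: fun_eq_iff slot_contents_def fill_slot_def n_def nth_list_update)
  have fresh: "slot_moment \<rho> N bs ((slot_contents zs)(t := slot_contents zs t * b)) =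
      slot_moment \<rho> N bs (slot_contents (zs @ [(b, True)]))" if "t \<in> {n..<N}" for t
  proof -
    have "(slot_contents zs)(t := slot_contents zs t * b) =
        slot_contents (zs @ [(b, True)]) \<circ> Transposition.transpose n t"
      using that
      by (auto simp: fun_eq_iff slot_contents_def n_def nth_append Transposition.transpose_def)
    moreover have "Transposition.transpose n t permutes {..<N}"
      using that assms by (intro permutes_swap_id) (auto simp: n_def)
    ultimately show ?thesis
      by (simp add: slot_moment_permute)
  qed
  have split: "(\<Sum>t<N. f t) = (\<Sum>t<n. f t) + (\<Sum>t\<in>{n..<N}. f t)" for f :: "nat \<Rightarrow> complex"
    using assms by (simp add: n_def lessThan_atLeast0 sum.atLeastLessThan_concat)
  have "slot_moment \<rho> N (b # bs) (slot_contents zs) =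
      (\<Sum>j<n. slot_moment \<rho> N bs ((slot_contents zs)(j := slot_contents zs j * b))) +
      (\<Sum>t\<in>{n..<N}. slot_moment \<rho> N bs ((slot_contents zs)(t := slot_contents zs t * b)))"
    unfolding slot_moment_Cons by (rule split)
  also have "\<dots> = (\<Sum>j<n. slot_moment \<rho> N bs (slot_contents (fill_slot zs j b))) +
      of_nat (N - n) * slot_moment \<rho> N bs (slot_contents (zs @ [(b, True)]))"
    by (simp add: occupied fresh)
  finally show ?thesis
    by (simp add: n_def)
qed

lemma slot_moment_slot_contents_eq_poly:
  assumes unital: "\<rho> 1 = 1"
  shows "length zs \<le> N \<Longrightarrow>
    slot_moment \<rho> N bs (slot_contents zs) = poly (moment_poly \<rho> bs zs) (of_nat (N - length zs))"
proof (induction bs arbitrary: zs)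
  case Nil
  have "(\<Prod>t<N. \<rho> (slot_contents zs t)) = (\<Prod>j<length zs. \<rho> (fst (zs ! j)))"
    using Nil by (intro prod.mono_neutral_cong_right) (auto simp: slot_contents_def unital)
  then show ?case
    by (simp add: slot_moment_def)
next
  case (Cons b bs)
  have opened: "of_nat (N - length zs) * slot_moment \<rho> N bs (slot_contents (zs @ [(b, True)])) =
      poly (pCons 0 (pcompose (moment_poly \<rho> bs (zs @ [(b, True)])) [:-1, 1:])) (of_nat (N - length zs))"
  proof (cases "length zs = N")
    case False
    with Cons.prems have "length (zs @ [(b, True)]) \<le> N"
      by simp
    then show ?thesis
      by (simp add: Cons.IH poly_pcompose of_nat_diff) (simp add: algebra_simps)
  qed simp
  show ?case
    unfolding slot_moment_Cons_slot_contents[OF Cons.prems] opened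
    using Cons.prems by (simp add: Cons.IH poly_sum)
qed

text \<open>A slot holding a lone centered letter contributes \<open>0\<close>, so every non-vanishing
  placement puts at least two letters into each occupied slot; hence the degree in the number
  of empty slots is at most half the number of letters.\<close>

lemma coeff_moment_poly_eq_0:
  assumes "\<forall>(x, lone)\<in>set zs. lone \<longrightarrow> \<rho> x = 0"
    and "\<forall>b\<in>set bs. \<rho> b = 0"
    and "length bs < 2 * i + singletons zs"
  shows "coeff (moment_poly \<rho> bs zs) i = 0"
  using assms
proof (induction bs arbitrary: zs i)
  case Nil
  show ?case
  proof (cases i)
    case 0
    with Nil.prems obtain j where "j < length zs" "snd (zs ! j)"
      by (auto simp: singletons_def filter_empty_conv in_set_conv_nth)
    with Nil.prems(1) have "\<rho> (fst (zs ! j)) = 0"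
      by (metis (mono_tags, lifting) case_prodE nth_mem prod.sel)
    with \<open>j < length zs\<close> show ?thesis
      by (simp add: 0) (blast intro: prod_zero)
  qed simp
next
  case (Cons b bs)
  have filled: "coeff (moment_poly \<rho> bs (fill_slot zs j b)) i = 0" if "j < length zs" for j
  proof (rule Cons.IH)
    show "\<forall>(x, lone)\<in>set (fill_slot zs j b). lone \<longrightarrow> \<rho> x = 0"
      using Cons.prems(1) set_update_subset_insert[of zs j] by (fastforce simp: fill_slot_def)
    show "length bs < 2 * i + singletons (fill_slot zs j b)"
      using singletons_fill_slot[OF that, of b] Cons.prems(3) by (simp split: if_splits)
  qed (use Cons.prems(2) in simp)
  have opened: "coeff (pCons 0 (pcompose (moment_poly \<rho> bs (zs @ [(b, True)])) [:-1, 1:])) i = 0"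
  proof (cases i)
    case (Suc i')
    have "coeff (moment_poly \<rho> bs (zs @ [(b, True)])) j = 0" if "i' \<le> j" for j
      using that Cons.prems Suc by (intro Cons.IH) auto
    then show ?thesis
      by (simp add: Suc coeff_pcompose_shift_eq_0)
  qed simp
  show ?case
    by (simp add: coeff_sum filled opened)
qed

lemma degree_moment_poly:
  assumes "\<forall>b\<in>set bs. \<rho> b = 0"
  shows "degree (moment_poly \<rho> bs []) \<le> length bs div 2"
  using assms by (intro degree_le allI impI coeff_moment_poly_eq_0) (auto simp: singletons_def)

text \<open>The top coefficient only sees the placements that pair each letter with a singleton
  or open a new slot.\<close>

lemma coeff_moment_poly_Cons_top:
  assumes zs: "\<forall>(x, lone)\<in>set zs. lone \<longrightarrow> \<rho> x = 0"
    and bs: "\<forall>c\<in>set (b # bs). \<rho> c = 0"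
    and top: "Suc (length bs) = 2 * h + singletons zs"
  shows "coeff (moment_poly \<rho> (b # bs) zs) h =
    (\<Sum>j | j < length zs \<and> snd (zs ! j). coeff (moment_poly \<rho> bs (fill_slot zs j b)) h) +
    (if h = 0 then 0 else coeff (moment_poly \<rho> bs (zs @ [(b, True)])) (h - 1))"
proof -
  have zs_fill: "\<forall>(x, lone)\<in>set (fill_slot zs j b). lone \<longrightarrow> \<rho> x = 0" for j
    using zs set_update_subset_insert[of zs j] by (fastforce simp: fill_slot_def)
  have "coeff (moment_poly \<rho> bs (fill_slot zs j b)) h = 0"
    if "j < length zs" "\<not> snd (zs ! j)" for j
    using that singletons_fill_slot[OF that(1), of b] top bs
    by (intro coeff_moment_poly_eq_0 zs_fill) auto
  then have filled: "(\<Sum>j<length zs. coeff (moment_poly \<rho> bs (fill_slot zs j b)) h) =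
      (\<Sum>j | j < length zs \<and> snd (zs ! j). coeff (moment_poly \<rho> bs (fill_slot zs j b)) h)"
    by (intro sum.mono_neutral_right) auto
  have opened: "coeff (pCons 0 (pcompose (moment_poly \<rho> bs (zs @ [(b, True)])) [:-1, 1:])) h =
      (if h = 0 then 0 else coeff (moment_poly \<rho> bs (zs @ [(b, True)])) (h - 1))"
  proof (cases h)
    case (Suc h')
    have "degree (moment_poly \<rho> bs (zs @ [(b, True)])) \<le> h'"
      using zs bs top Suc by (intro degree_le allI impI coeff_moment_poly_eq_0) auto
    then show ?thesis
      by (simp add: Suc coeff_pcompose_shift_degree)
  qed simp
  show ?thesis
    by (simp add: coeff_sum filled opened)
qed

lemma fact_pairing_recurrence:
  assumes "Suc n = 2 * h + s"
  shows "of_nat s * (fact n / (2 ^ h * fact h)) +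
      (if h = 0 then 0 else fact n / (2 ^ (h - 1) * fact (h - 1))) =
    (fact (Suc n) / (2 ^ h * fact h) :: 'a::field_char_0)"
proof (cases h)
  case 0
  with assms have "s = Suc n"
    by simp
  with 0 show ?thesis
    by simp
next
  case (Suc h')
  define X where "X = fact n / (2 ^ h * fact h :: 'a)"
  have double: "(2 :: 'a) ^ h * fact h = of_nat (2 * h) * (2 ^ h' * fact h')"
    by (simp add: Suc algebra_simps)
  have "(of_nat (2 * h) :: 'a) \<noteq> 0"
    by (simp only: of_nat_eq_0_iff) (simp add: Suc)
  moreover have "(2 :: 'a) ^ h' * fact h' \<noteq> 0"
    by simp
  ultimately have halved: "fact n / (2 ^ h' * fact h') = of_nat (2 * h) * X"
    unfolding X_def double by (simp del: of_nat_mult)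
  have "h \<noteq> 0" "h - 1 = h'"
    using Suc by simp_all
  then have "of_nat s * X + (if h = 0 then 0 else fact n / (2 ^ (h - 1) * fact (h - 1))) =
      (of_nat s + of_nat (2 * h)) * X"
    by (simp only: if_False halved distrib_right)
  also have "of_nat s + of_nat (2 * h) = (of_nat (Suc n) :: 'a)"
    using assms by (simp only: of_nat_add [symmetric]) simp
  finally show ?thesis
    by (simp add: X_def)
qed

definition paired_slots :: "'a::ring_1 \<Rightarrow> ('a \<times> bool) list \<Rightarrow> bool"
  where "paired_slots B zs \<longleftrightarrow> (\<forall>(x, lone)\<in>set zs. x = (if lone then B else B * B))"

lemma paired_slots_append_True [simp]: "paired_slots B (zs @ [(B, True)]) \<longleftrightarrow> paired_slots B zs"
  by (auto simp: paired_slots_def)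

lemma paired_slots_fill_slot:
  assumes "paired_slots B zs" "j < length zs" "snd (zs ! j)"
  shows "paired_slots B (fill_slot zs j B)"
proof -
  have "zs ! j = (B, True)"
    using assms by (auto simp: paired_slots_def dest!: nth_mem)
  then show ?thesis
    using assms(1) set_update_subset_insert[of zs j] by (fastforce simp: paired_slots_def fill_slot_def)
qed

lemma prod_paired_slots:
  assumes "paired_slots B zs" "singletons zs = 0"
  shows "(\<Prod>j<length zs. \<rho> (fst (zs ! j))) = \<rho> (B * B) ^ length zs"
proof -
  have "fst (zs ! j) = B * B" if "j < length zs" for j
  proof -
    from that assms have "\<not> snd (zs ! j)" "case zs ! j of (x, lone) \<Rightarrow> x = (if lone then B else B * B)"
      by (auto simp: paired_slots_def singletons_def filter_empty_conv)
    then show ?thesis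
      by (auto split: prod.splits)
  qed
  then show ?thesis
    by simp
qed

text \<open>Starting from slots holding either a lone \<open>B\<close> or the pair \<open>B * B\<close>, the top coefficient
  counts the ways of pairing up the letters, each pair contributing \<open>\<rho> (B * B)\<close>.\<close>

lemma coeff_moment_poly_replicate:
  assumes B: "\<rho> B = 0"
  shows "paired_slots B zs \<Longrightarrow> n = 2 * h + singletons zs \<Longrightarrow>
    coeff (moment_poly \<rho> (replicate n B) zs) h =
      fact n / (2 ^ h * fact h) * \<rho> (B * B) ^ (h + length zs)"
proof (induction n arbitrary: h zs)
  case 0
  then show ?case
    by (simp add: prod_paired_slots)
next
  case (Suc n)
  define s where "s = singletons zs"
  have filled: "coeff (moment_poly \<rho> (replicate n B) (fill_slot zs j B)) h =
      fact n / (2 ^ h * fact h) * \<rho> (B * B) ^ (h + length zs)"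
    if "j \<in> {j. j < length zs \<and> snd (zs ! j)}" for j
    using that Suc.prems singletons_fill_slot[of j zs B]
    by (subst Suc.IH) (auto simp: paired_slots_fill_slot)
  have opened: "coeff (moment_poly \<rho> (replicate n B) (zs @ [(B, True)])) (h - 1) =
      fact n / (2 ^ (h - 1) * fact (h - 1)) * \<rho> (B * B) ^ (h + length zs)" if "h \<noteq> 0"
    using that Suc.prems by (subst Suc.IH) auto
  have "coeff (moment_poly \<rho> (replicate (Suc n) B) zs) h =
      (\<Sum>j | j < length zs \<and> snd (zs ! j). coeff (moment_poly \<rho> (replicate n B) (fill_slot zs j B)) h) +
      (if h = 0 then 0 else coeff (moment_poly \<rho> (replicate n B) (zs @ [(B, True)])) (h - 1))"
    unfolding replicate_Suc using Suc.prems B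
    by (intro coeff_moment_poly_Cons_top) (auto simp: paired_slots_def)
  also have "\<dots> = (of_nat s * (fact n / (2 ^ h * fact h)) +
        (if h = 0 then 0 else fact n / (2 ^ (h - 1) * fact (h - 1)))) * \<rho> (B * B) ^ (h + length zs)"
    using opened by (simp add: filled card_singleton_slots s_def distrib_right)
  also have "\<dots> = fact (Suc n) / (2 ^ h * fact h) * \<rho> (B * B) ^ (h + length zs)"
    using Suc.prems(2) by (simp only: fact_pairing_recurrence s_def)
  finally show ?case .
qed


section \<open>The limit functional\<close>

definition clt_scale :: "nat \<Rightarrow> complex"
  where "clt_scale N = complex_of_real (1 / sqrt (real N))"

lemma clt_scale_tendsto_0: "clt_scale \<longlonglongrightarrow> 0"
proof -
  have "(\<lambda>N. sqrt (inverse (real N))) \<longlonglongrightarrow> sqrt 0"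
    by (intro tendsto_real_sqrt lim_inverse_n)
  then have "(\<lambda>N. complex_of_real (1 / sqrt (real N))) \<longlonglongrightarrow> complex_of_real 0"
    by (intro tendsto_of_real) (simp add: real_sqrt_inverse divide_inverse)
  then show ?thesis
    by (simp add: clt_scale_def [abs_def])
qed

lemma clt_scale_power_even: "clt_scale N ^ (2 * h) = 1 / of_nat N ^ h"
  by (simp add: clt_scale_def power_mult power_divide flip: of_real_power)

lemma tendsto_poly_over_power:
  fixes P :: "complex poly"
  assumes "degree P \<le> d"
  shows "(\<lambda>N. poly P (of_nat N) / of_nat N ^ d) \<longlonglongrightarrow> coeff P d"
proof -
  have "poly P (of_nat N) / of_nat N ^ d = (\<Sum>i\<le>d. coeff P i * (1 / of_nat N) ^ (d - i))"
    if "N \<ge> 1" for N :: nat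
  proof -
    have "poly P (of_nat N) = (\<Sum>i\<le>d. coeff P i * of_nat N ^ i)"
      unfolding poly_altdef using assms by (intro sum.mono_neutral_left) (auto simp: coeff_eq_0)
    moreover have "coeff P i * of_nat N ^ i / of_nat N ^ d = coeff P i * (1 / of_nat N) ^ (d - i)"
      if "i \<le> d" for i
      using that \<open>N \<ge> 1\<close> by (simp add: power_diff power_divide)
    ultimately show ?thesis
      by (simp add: sum_divide_distrib)
  qed
  then have eventually_eq: "\<forall>\<^sub>F N in sequentially.
      (\<Sum>i\<le>d. coeff P i * (1 / of_nat N) ^ (d - i)) = poly P (of_nat N) / of_nat N ^ d"
    by (auto intro!: eventually_sequentiallyI[of 1])
  have "(\<lambda>N. \<Sum>i\<le>d. coeff P i * (1 / of_nat N :: complex) ^ (d - i)) \<longlonglongrightarrow>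
      (\<Sum>i\<le>d. coeff P i * 0 ^ (d - i))"
    by (intro tendsto_intros)
  also have "(\<Sum>i\<le>d. coeff P i * (0 :: complex) ^ (d - i)) = (\<Sum>i\<le>d. if i = d then coeff P i else 0)"
    by (intro sum.cong) auto
  also have "\<dots> = coeff P d"
    by simp
  finally have "(\<lambda>N. \<Sum>i\<le>d. coeff P i * (1 / of_nat N :: complex) ^ (d - i)) \<longlonglongrightarrow> coeff P d" .
  then show ?thesis
    using eventually_eq by (rule Lim_transform_eventually)
qed

definition clt_moment :: "('a::ring_1 \<Rightarrow> complex) \<Rightarrow> 'a list \<Rightarrow> complex"
  where "clt_moment \<rho> bs =
    (if even (length bs) then coeff (moment_poly \<rho> bs []) (length bs div 2) else 0)"

lemma slot_moment_eq_poly: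
  assumes "\<rho> 1 = 1"
  shows "slot_moment \<rho> N bs (\<lambda>_. 1) = poly (moment_poly \<rho> bs []) (of_nat N)"
proof -
  have "slot_contents [] = (\<lambda>_. 1 :: 'a)"
    by (simp add: fun_eq_iff slot_contents_def)
  then show ?thesis
    using slot_moment_slot_contents_eq_poly[where \<rho> = \<rho>, OF assms, of "[]" N bs] by simp
qed

lemma tendsto_clt_moment:
  assumes unital: "\<rho> 1 = 1" and centered: "\<forall>b\<in>set bs. \<rho> b = 0"
  shows "(\<lambda>N. clt_scale N ^ length bs * slot_moment \<rho> N bs (\<lambda>_. 1)) \<longlonglongrightarrow> clt_moment \<rho> bs"
proof -
  define P where "P = moment_poly \<rho> bs []"
  define h where "h = length bs div 2"
  define c where "c = (\<lambda>N. if even (length bs) then 1 else clt_scale N)"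
  have lim: "(\<lambda>N. poly P (of_nat N) / of_nat N ^ h) \<longlonglongrightarrow> coeff P h"
    using degree_moment_poly[OF centered] by (intro tendsto_poly_over_power) (simp add: P_def h_def)
  have "clt_scale N ^ length bs = c N * (1 / of_nat N ^ h)" for N
  proof (cases "even (length bs)")
    case True
    then have "length bs = 2 * h"
      by (simp add: h_def)
    with True show ?thesis
      by (simp add: c_def clt_scale_power_even)
  next
    case False
    then have "length bs = Suc (2 * h)"
      by (simp add: h_def)
    with False show ?thesis
      by (simp add: c_def clt_scale_power_even)
  qed
  then have eq: "clt_scale N ^ length bs * slot_moment \<rho> N bs (\<lambda>_. 1) =
      c N * (poly P (of_nat N) / of_nat N ^ h)" for N
    by (simp add: slot_moment_eq_poly[where \<rho> = \<rho>, OF unital] P_def)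
  have "c \<longlonglongrightarrow> (if even (length bs) then 1 else 0)"
    by (cases "even (length bs)") (simp_all add: c_def clt_scale_tendsto_0)
  then have "(\<lambda>N. c N * (poly P (of_nat N) / of_nat N ^ h)) \<longlonglongrightarrow>
      (if even (length bs) then 1 else 0) * coeff P h"
    using lim by (rule tendsto_mult)
  then show ?thesis
    unfolding eq by (cases "even (length bs)") (simp_all add: clt_moment_def P_def h_def)
qed

lemma clt_moment_replicate:
  assumes "\<rho> B = 0"
  shows "clt_moment \<rho> (replicate m B) =
    (if even m then fact m / (2 ^ (m div 2) * fact (m div 2)) * \<rho> (B * B) ^ (m div 2) else 0)"
  using coeff_moment_poly_replicate[where \<rho> = \<rho>, OF assms, of "[]" m "m div 2"]
  by (simp add: clt_moment_def singletons_def paired_slots_def)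

context unital_additive
begin

lemma slot_moment_replicate_sum:
  assumes "finite S"
  shows "slot_moment \<rho> N (v @ replicate m (sum a S)) z = (\<Sum>g\<in>words S m. slot_moment \<rho> N (v @ map a g) z)"
proof (induction m arbitrary: v)
  case (Suc m)
  have "slot_moment \<rho> N (v @ replicate (Suc m) (sum a S)) z =
      (\<Sum>i\<in>S. slot_moment \<rho> N ((v @ [a i]) @ replicate m (sum a S)) z)"
    using slot_moment_letter_sum[OF assms, of N v a "replicate m (sum a S)" z] by simp
  also have "\<dots> = (\<Sum>i\<in>S. \<Sum>g\<in>words S m. slot_moment \<rho> N ((v @ [a i]) @ map a g) z)"
    by (simp only: Suc.IH)
  also have "\<dots> = (\<Sum>g\<in>words S (Suc m). slot_moment \<rho> N (v @ map a g) z)"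
    by (simp add: sum_words_Suc[OF assms])
  finally show ?case .
qed simp

lemma clt_moment_replicate_sum:
  assumes "finite S" "\<forall>i\<in>S. \<rho> (a i) = 0"
  shows "clt_moment \<rho> (replicate m (sum a S)) = (\<Sum>g\<in>words S m. clt_moment \<rho> (map a g))"
proof (rule LIMSEQ_unique)
  show "(\<lambda>N. clt_scale N ^ length (replicate m (sum a S)) *
      slot_moment \<rho> N (replicate m (sum a S)) (\<lambda>_. 1)) \<longlonglongrightarrow> clt_moment \<rho> (replicate m (sum a S))"
    using assms by (intro tendsto_clt_moment[where \<rho> = \<rho>, OF unital]) (simp add: map_sum)
  have "(\<lambda>N. \<Sum>g\<in>words S m. clt_scale N ^ length (map a g) * slot_moment \<rho> N (map a g) (\<lambda>_. 1))
      \<longlonglongrightarrow> (\<Sum>g\<in>words S m. clt_moment \<rho> (map a g))"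
    using assms by (intro tendsto_sum tendsto_clt_moment[where \<rho> = \<rho>, OF unital]) (auto simp: words_def)
  moreover have "(\<Sum>g\<in>words S m. clt_scale N ^ length (map a g) * slot_moment \<rho> N (map a g) (\<lambda>_. 1)) =
      clt_scale N ^ length (replicate m (sum a S)) * slot_moment \<rho> N (replicate m (sum a S)) (\<lambda>_. 1)"
    for N
    using slot_moment_replicate_sum[OF assms(1), of N "[]" m a]
    by (simp add: sum_distrib_left words_def)
  ultimately show "(\<lambda>N. clt_scale N ^ length (replicate m (sum a S)) *
      slot_moment \<rho> N (replicate m (sum a S)) (\<lambda>_. 1)) \<longlonglongrightarrow> (\<Sum>g\<in>words S m. clt_moment \<rho> (map a g))"
    by simp
qed

text \<open>The commutator term in \<open>slot_moment_swap\<close> has one letter less, so after scaling it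
  carries an extra factor \<open>clt_scale N \<longrightarrow> 0\<close>.\<close>

lemma clt_moment_swap:
  assumes "\<forall>c\<in>set (v @ a # b # w). \<rho> c = 0" and "\<rho> (a * b) = \<rho> (b * a)"
  shows "clt_moment \<rho> (v @ a # b # w) = clt_moment \<rho> (v @ b # a # w)"
proof -
  define D where "D = a * b - b * a"
  define L where "L = length (v @ D # w)"
  have D: "\<rho> D = 0"
    using assms(2) by (simp add: D_def map_diff)
  have "(\<lambda>N. clt_scale N ^ Suc L * slot_moment \<rho> N (v @ a # b # w) (\<lambda>_. 1) -
      clt_scale N ^ Suc L * slot_moment \<rho> N (v @ b # a # w) (\<lambda>_. 1)) \<longlonglongrightarrow>
      clt_moment \<rho> (v @ a # b # w) - clt_moment \<rho> (v @ b # a # w)"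
    using tendsto_clt_moment[where \<rho> = \<rho>, OF unital, of "v @ a # b # w"]
      tendsto_clt_moment[where \<rho> = \<rho>, OF unital, of "v @ b # a # w"] assms(1)
    by (intro tendsto_diff) (simp_all add: L_def)
  moreover have "(\<lambda>N. clt_scale N ^ Suc L * slot_moment \<rho> N (v @ a # b # w) (\<lambda>_. 1) -
      clt_scale N ^ Suc L * slot_moment \<rho> N (v @ b # a # w) (\<lambda>_. 1)) =
      (\<lambda>N. clt_scale N * (clt_scale N ^ L * slot_moment \<rho> N (v @ D # w) (\<lambda>_. 1)))"
    using slot_moment_swap[of _ v a b w "\<lambda>_. 1"]
    by (simp add: D_def fun_eq_iff right_diff_distrib[symmetric] mult.assoc)
  moreover have "(\<lambda>N. clt_scale N * (clt_scale N ^ L * slot_moment \<rho> N (v @ D # w) (\<lambda>_. 1)))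
      \<longlonglongrightarrow> 0 * clt_moment \<rho> (v @ D # w)"
    using assms(1) D unfolding L_def
    by (intro tendsto_mult clt_scale_tendsto_0 tendsto_clt_moment[where \<rho> = \<rho>, OF unital]) auto
  ultimately show ?thesis
    using LIMSEQ_unique by fastforce
qed

lemma clt_moment_move_left:
  assumes "\<forall>c\<in>set (u @ v @ a # w). \<rho> c = 0" and "\<forall>c\<in>set v. \<rho> (c * a) = \<rho> (a * c)"
  shows "clt_moment \<rho> (u @ v @ a # w) = clt_moment \<rho> (u @ a # v @ w)"
  using assms
proof (induction v arbitrary: w rule: rev_induct)
  case (snoc c v)
  have "clt_moment \<rho> (u @ (v @ [c]) @ a # w) = clt_moment \<rho> ((u @ v) @ c # a # w)"
    by simp
  also have "\<dots> = clt_moment \<rho> ((u @ v) @ a # c # w)"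
    using snoc.prems by (intro clt_moment_swap) auto
  also have "\<dots> = clt_moment \<rho> (u @ a # v @ c # w)"
    using snoc.prems by (simp add: snoc.IH)
  finally show ?case
    by simp
qed simp

lemma clt_moment_perm:
  assumes "mset bs' = mset bs"
    and centered: "\<forall>b\<in>set bs. \<rho> b = 0"
    and commute: "\<forall>a\<in>set bs. \<forall>b\<in>set bs. \<rho> (a * b) = \<rho> (b * a)"
  shows "clt_moment \<rho> bs' = clt_moment \<rho> bs"
proof -
  have "clt_moment \<rho> (u @ xs') = clt_moment \<rho> (u @ xs)"
    if "mset xs' = mset xs" "set u \<union> set xs \<subseteq> set bs" for u xs xs'
    using that
  proof (induction xs' arbitrary: u xs)
    case (Cons a xs')
    then have "set (a # xs') = set xs"
      by (intro mset_eq_setD) simp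
    then have "a \<in> set xs"
      by auto
    then obtain v w where xs: "xs = v @ a # w"
      by (meson split_list)
    have "clt_moment \<rho> ((u @ [a]) @ xs') = clt_moment \<rho> ((u @ [a]) @ v @ w)"
      using Cons.prems by (intro Cons.IH) (auto simp: xs)
    also have "\<dots> = clt_moment \<rho> (u @ v @ a # w)"
      using Cons.prems centered commute
      by (subst clt_moment_move_left) (auto simp: xs subset_iff)
    finally show ?case
      by (simp add: xs)
  qed simp
  from this[of bs' bs "[]"] show ?thesis
    using assms(1) by simp
qed

lemma clt_moment_polarization:
  assumes centered: "\<forall>b\<in>set bs. \<rho> b = 0"
    and commute: "\<forall>a\<in>set bs. \<forall>b\<in>set bs. \<rho> (a * b) = \<rho> (b * a)"
  shows "(\<Sum>T\<in>Pow {..<length bs}. (-1) ^ (length bs - card T) *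
      clt_moment \<rho> (replicate (length bs) (\<Sum>i\<in>T. bs ! i))) = fact (length bs) * clt_moment \<rho> bs"
proof -
  define m where "m = length bs"
  have "clt_moment \<rho> (replicate m (\<Sum>i\<in>T. bs ! i)) = (\<Sum>g\<in>words T m. clt_moment \<rho> (map ((!) bs) g))"
    if "T \<in> Pow {..<m}" for T
    using that centered by (intro clt_moment_replicate_sum) (auto simp: m_def finite_subset)
  moreover have "clt_moment \<rho> (map ((!) bs) g) = clt_moment \<rho> bs"
    if "g \<in> permutations_of_set {..<m}" for g
  proof (rule clt_moment_perm[OF _ centered commute])
    from that have "distinct g" "set g = {..<m}"
      by (simp_all add: permutations_of_set_def)
    then have "mset g = mset [0..<m]"
      by (simp add: atLeast0LessThan flip: mset_set_set)
    then have "mset (map ((!) bs) g) = mset (map ((!) bs) [0..<m])"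
      by (simp only: mset_map)
    then show "mset (map ((!) bs) g) = mset bs"
      by (simp add: m_def map_nth)
  qed
  ultimately show ?thesis
    by (simp add: polarization flip: m_def)
qed

end

section \<open>Gaussian moments\<close>

lemma normal_moment:
  assumes "\<sigma> > 0" and Y: "distributed M lborel Y (normal_density 0 \<sigma>)"
  shows "integrable M (\<lambda>x. Y x ^ m)"
    and "integral\<^sup>L M (\<lambda>x. Y x ^ m) =
      (if even m then fact m / (2 ^ (m div 2) * fact (m div 2)) * (\<sigma>\<^sup>2) ^ (m div 2) else 0)"
proof -
  show "integrable M (\<lambda>x. Y x ^ m)"
    using distributed_integrable[OF Y, of "\<lambda>x. x ^ m"] integrable_normal_moment[OF assms(1), of 0 m]
    by simp
  have moment: "integral\<^sup>L M (\<lambda>x. Y x ^ m) = integral\<^sup>L lborel (\<lambda>x. normal_density 0 \<sigma> x * (x - 0) ^ m)"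
    using distributed_integral[OF Y, of "\<lambda>x. x ^ m"] by simp
  show "integral\<^sup>L M (\<lambda>x. Y x ^ m) =
      (if even m then fact m / (2 ^ (m div 2) * fact (m div 2)) * (\<sigma>\<^sup>2) ^ (m div 2) else 0)"
  proof (cases "even m")
    case True
    then obtain h where "m = 2 * h"
      by blast
    then show ?thesis
      using moment integral_normal_moment_even[OF assms(1), of 0 h] assms(1)
      by (simp add: power_divide field_simps)
  next
    case False
    then obtain h where "m = 2 * h + 1"
      using oddE by blast
    then show ?thesis
      using moment integral_normal_moment_odd[OF assms(1), of 0 h] by simp
  qed
qed

lemma (in prob_space) centered_gaussian_moment:
  assumes "centered_gaussian M Y"
  shows "integrable M (\<lambda>x. Y x ^ m)"
    and "integral\<^sup>L M (\<lambda>x. Y x ^ m) = (if even m then fact m / (2 ^ (m div 2) * fact (m div 2)) *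
      (integral\<^sup>L M (\<lambda>x. Y x ^ 2)) ^ (m div 2) else 0)"
proof -
  have Y: "Y \<in> borel_measurable M"
    using assms by (simp add: centered_gaussian_def)
  consider (degenerate) "AE x in M. Y x = 0"
    | (normal) \<sigma> where "\<sigma> > 0" "distributed M lborel Y (normal_density 0 \<sigma>)"
    using assms unfolding centered_gaussian_def by blast
  then have "integrable M (\<lambda>x. Y x ^ m) \<and> integral\<^sup>L M (\<lambda>x. Y x ^ m) =
      (if even m then fact m / (2 ^ (m div 2) * fact (m div 2)) *
        (integral\<^sup>L M (\<lambda>x. Y x ^ 2)) ^ (m div 2) else 0)"
  proof cases
    case degenerate
    have "AE x in M. Y x ^ j = 0" if "j > 0" for j
      using degenerate by eventually_elim (use that in simp)
    then have vanish: "integrable M (\<lambda>x. Y x ^ j) \<and> integral\<^sup>L M (\<lambda>x. Y x ^ j) = 0"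
      if "j > 0" for j
      using that Y integrable_cong_AE[of "\<lambda>x. Y x ^ j" M "\<lambda>_. 0"] integral_cong_AE[of "\<lambda>x. Y x ^ j" M "\<lambda>_. 0"]
      by simp
    show ?thesis
    proof (cases "m = 0")
      case False
      then show ?thesis
        using vanish[of m] vanish[of 2] by (auto simp: power_0_left elim: evenE)
    qed (simp add: prob_space)
  next
    case normal
    then show ?thesis
      using normal_moment[OF normal, of 2] normal_moment[OF normal, of m] by simp
  qed
  then show "integrable M (\<lambda>x. Y x ^ m)"
    and "integral\<^sup>L M (\<lambda>x. Y x ^ m) = (if even m then fact m / (2 ^ (m div 2) * fact (m div 2)) *
      (integral\<^sup>L M (\<lambda>x. Y x ^ 2)) ^ (m div 2) else 0)"
    by simp_all
qed

locale centered_gaussian_family = prob_space M for M :: "'b measure" +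
  fixes k :: nat and X :: "nat \<Rightarrow> 'b \<Rightarrow> real"
  assumes jointly_gaussian: "jointly_centered_gaussian M k X"
begin

lemma centered_gaussian_sum:
  assumes "finite T" "\<forall>i\<in>T. u i < k"
  shows "centered_gaussian M (\<lambda>x. \<Sum>i\<in>T. X (u i) x)"
proof -
  have "(\<Sum>i\<in>T. X (u i) x) = (\<Sum>b<k. real (card {i\<in>T. u i = b}) * X b x)" for x
  proof -
    have "(\<Sum>i\<in>T. X (u i) x) = (\<Sum>b<k. \<Sum>i | i \<in> T \<and> u i = b. X (u i) x)"
      using assms by (intro sum.group[symmetric]) auto
    then show ?thesis
      by simp
  qed
  then show ?thesis
    using jointly_gaussian unfolding jointly_centered_gaussian_def by presburger
qed

lemma integral_prod_polarization:
  assumes "set u \<subseteq> {..<k}"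
  shows "integrable M (\<lambda>x. \<Prod>i<length u. X (u ! i) x)"
    and "fact (length u) * integral\<^sup>L M (\<lambda>x. \<Prod>i<length u. X (u ! i) x) =
      (\<Sum>T\<in>Pow {..<length u}. (-1) ^ (length u - card T) *
        integral\<^sup>L M (\<lambda>x. (\<Sum>i\<in>T. X (u ! i) x) ^ length u))"
proof -
  define m where "m = length u"
  define Y where "Y T x = (\<Sum>i\<in>T. X (u ! i) x) ^ m" for T x
  have integrable_Y: "integrable M (Y T)" if "T \<in> Pow {..<m}" for T
  proof -
    have "finite T" "\<forall>i\<in>T. u ! i < k"
      using that assms finite_subset by (auto simp: m_def dest!: nth_mem)
    then show ?thesis
      unfolding Y_def [abs_def] by (intro centered_gaussian_moment centered_gaussian_sum)
  qed
  have "(\<Prod>i<m. X (u ! i) x) = (\<Sum>T\<in>Pow {..<m}. (-1) ^ (m - card T) * Y T x) / fact m" for x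
    using polarization_prod[of m "\<lambda>i. X (u ! i) x"] by (simp add: Y_def field_simps)
  then have prod_eq: "(\<lambda>x. \<Prod>i<m. X (u ! i) x) = (\<lambda>x. (\<Sum>T\<in>Pow {..<m}. (-1) ^ (m - card T) * Y T x) / fact m)"
    by (rule ext)
  show "integrable M (\<lambda>x. \<Prod>i<length u. X (u ! i) x)"
    unfolding m_def [symmetric] prod_eq using integrable_Y by (intro integrable_divide_zero integrable_sum) auto
  have "integral\<^sup>L M (\<lambda>x. \<Prod>i<m. X (u ! i) x) =
      (\<Sum>T\<in>Pow {..<m}. (-1) ^ (m - card T) * integral\<^sup>L M (Y T)) / fact m"
    unfolding prod_eq using integrable_Y by (simp add: integral_sum)
  then show "fact (length u) * integral\<^sup>L M (\<lambda>x. \<Prod>i<length u. X (u ! i) x) =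
      (\<Sum>T\<in>Pow {..<length u}. (-1) ^ (length u - card T) *
        integral\<^sup>L M (\<lambda>x. (\<Sum>i\<in>T. X (u ! i) x) ^ length u))"
    by (simp add: m_def Y_def [abs_def])
qed

lemma integrable_mult:
  assumes "a < k" "b < k"
  shows "integrable M (\<lambda>x. X a x * X b x)"
  using integral_prod_polarization(1)[of "[a, b]"] assms by (simp add: lessThan_Suc mult.commute)

end

lemma prod_list_map_conv_prod_nth: "prod_list (map f xs) = (\<Prod>i<length xs. f (xs ! i))"
  by (induction xs) (simp_all add: prod.lessThan_Suc_shift del: prod.lessThan_Suc)

context centered_gaussian_family
begin

lemma integral_power_sum_eq_clt_moment:
  assumes "unital_additive \<rho>"
    and centered: "\<forall>a<k. \<rho> (A a) = 0"
    and covariance: "\<forall>a<k. \<forall>b<k. complex_of_real (integral\<^sup>L M (\<lambda>x. X a x * X b x)) = \<rho> (A a * A b)"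
    and T: "finite T" "\<forall>i\<in>T. u i < k"
  shows "complex_of_real (integral\<^sup>L M (\<lambda>x. (\<Sum>i\<in>T. X (u i) x) ^ m)) =
    clt_moment \<rho> (replicate m (\<Sum>i\<in>T. A (u i)))"
proof -
  interpret unital_additive \<rho>
    by fact
  have "integral\<^sup>L M (\<lambda>x. (\<Sum>i\<in>T. X (u i) x) ^ 2) =
      (\<Sum>i\<in>T. \<Sum>j\<in>T. integral\<^sup>L M (\<lambda>x. X (u i) x * X (u j) x))"
    using T integrable_mult by (simp add: power2_eq_square sum_product integrable_sum)
  then have "complex_of_real (integral\<^sup>L M (\<lambda>x. (\<Sum>i\<in>T. X (u i) x) ^ 2)) =
      \<rho> ((\<Sum>i\<in>T. A (u i)) * (\<Sum>i\<in>T. A (u i)))"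
    using T covariance by (simp add: sum_distrib_left sum_distrib_right map_sum) (rule sum.swap)
  then show ?thesis
    using centered_gaussian_moment(2)[OF centered_gaussian_sum[OF T], of m] T centered
    by (simp add: clt_moment_replicate map_sum)
qed

text \<open>Both sides are polarized: \<open>E[\<Prod> X]\<close> becomes a combination of moments of the Gaussians
  \<open>\<Sum>i\<in>T. X (u ! i)\<close> and \<open>clt_moment\<close> the same combination of \<open>clt_moment\<close>s of powers, which
  agree term by term.\<close>

lemma integral_prod_eq_clt_moment:
  assumes "unital_additive \<rho>"
    and centered: "\<forall>a<k. \<rho> (A a) = 0"
    and commute: "\<forall>a<k. \<forall>b<k. \<rho> (A a * A b) = \<rho> (A b * A a)"
    and covariance: "\<forall>a<k. \<forall>b<k. complex_of_real (integral\<^sup>L M (\<lambda>x. X a x * X b x)) = \<rho> (A a * A b)"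
    and u: "set u \<subseteq> {..<k}"
  shows "complex_of_real (integral\<^sup>L M (\<lambda>x. prod_list (map (\<lambda>a. X a x) u))) = clt_moment \<rho> (map A u)"
proof -
  define m where "m = length u"
  have "of_nat (fact m) * complex_of_real (integral\<^sup>L M (\<lambda>x. \<Prod>i<m. X (u ! i) x)) =
      complex_of_real (fact m * integral\<^sup>L M (\<lambda>x. \<Prod>i<m. X (u ! i) x))"
    by simp
  also have "\<dots> = complex_of_real (\<Sum>T\<in>Pow {..<m}. (-1) ^ (m - card T) *
        integral\<^sup>L M (\<lambda>x. (\<Sum>i\<in>T. X (u ! i) x) ^ m))"
    by (simp only: m_def integral_prod_polarization(2)[OF u])
  also have "\<dots> = (\<Sum>T\<in>Pow {..<m}. (-1) ^ (m - card T) *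
      clt_moment \<rho> (replicate m (\<Sum>i\<in>T. A (u ! i))))"
    unfolding of_real_sum
  proof (intro sum.cong refl)
    fix T
    assume "T \<in> Pow {..<m}"
    then have "finite T" "\<forall>i\<in>T. u ! i < k"
      using u finite_subset by (auto simp: m_def dest!: nth_mem)
    then show "complex_of_real ((-1) ^ (m - card T) * integral\<^sup>L M (\<lambda>x. (\<Sum>i\<in>T. X (u ! i) x) ^ m)) =
        (-1) ^ (m - card T) * clt_moment \<rho> (replicate m (\<Sum>i\<in>T. A (u ! i)))"
      by (simp add: integral_power_sum_eq_clt_moment[OF assms(1) centered covariance])
  qed
  also have "\<dots> = of_nat (fact m) * clt_moment \<rho> (map A u)"
    using unital_additive.clt_moment_polarization[OF assms(1), of "map A u"] u centered commute
    by (auto simp: m_def subset_iff)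
  finally show ?thesis
    by (simp add: prod_list_map_conv_prod_nth m_def)
qed

end

section \<open>The tensor power\<close>

definition tsupp :: "'a tensor \<Rightarrow> 'a list set"
  where "tsupp x = {e. x e \<noteq> 0}"

definition wf_tensor :: "nat \<Rightarrow> 'a tensor \<Rightarrow> bool"
  where "wf_tensor N x \<longleftrightarrow> finite (tsupp x) \<and> (\<forall>e\<in>tsupp x. length e = N)"

text \<open>The product state of \<open>x\<close> multiplied from the left by the elementary tensor
  \<open>z 0 \<otimes> \<dots> \<otimes> z (N - 1)\<close>.\<close>

definition tstate_left :: "('a::ring_1 \<Rightarrow> complex) \<Rightarrow> nat \<Rightarrow> (nat \<Rightarrow> 'a) \<Rightarrow> 'a tensor \<Rightarrow> complex"
  where "tstate_left \<rho> N z x = (\<Sum>e\<in>tsupp x. x e * (\<Prod>t<N. \<rho> (z t * e ! t)))"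

lemma sum_tsupp_superset:
  assumes "finite T" "tsupp x \<subseteq> T"
  shows "(\<Sum>e\<in>tsupp x. x e * H e) = (\<Sum>e\<in>T. x e * H e)"
  using assms by (intro sum.mono_neutral_left) (auto simp: tsupp_def)

lemma tsupp_tmul_subset: "tsupp (tmul x y) \<subseteq> (\<lambda>(e1, e2). map2 (*) e1 e2) ` (tsupp x \<times> tsupp y)"
proof
  fix e
  assume "e \<in> tsupp (tmul x y)"
  then have "(\<Sum>(e1, e2) | x e1 \<noteq> 0 \<and> y e2 \<noteq> 0 \<and> map2 (*) e1 e2 = e. x e1 * y e2) \<noteq> 0"
    by (simp add: tsupp_def tmul_def)
  then obtain e1 e2 where "x e1 \<noteq> 0" "y e2 \<noteq> 0" "map2 (*) e1 e2 = e"
    by (rule sum.not_neutral_contains_not_neutral) auto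
  then show "e \<in> (\<lambda>(e1, e2). map2 (*) e1 e2) ` (tsupp x \<times> tsupp y)"
    by (force simp: tsupp_def)
qed

lemma wf_tensor_tmul:
  assumes "wf_tensor N x" "wf_tensor N y"
  shows "wf_tensor N (tmul x y)"
proof -
  have "finite ((\<lambda>(e1, e2). map2 (*) e1 e2) ` (tsupp x \<times> tsupp y))"
    using assms by (simp add: wf_tensor_def)
  moreover have "length e = N" if "e \<in> tsupp (tmul x y)" for e
    using tsupp_tmul_subset[of x y] that assms by (auto simp: wf_tensor_def)
  ultimately show ?thesis
    using tsupp_tmul_subset[of x y] by (auto simp: wf_tensor_def intro: finite_subset)
qed

lemma sum_tsupp_tmul:
  assumes "finite (tsupp x)" "finite (tsupp y)"
  shows "(\<Sum>e\<in>tsupp (tmul x y). tmul x y e * H e) =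
    (\<Sum>e1\<in>tsupp x. \<Sum>e2\<in>tsupp y. x e1 * y e2 * H (map2 (*) e1 e2))"
proof -
  define P where "P = tsupp x \<times> tsupp y"
  define f where "f = (\<lambda>(e1, e2). map2 (*) e1 e2 :: 'a list)"
  have "finite P"
    using assms by (simp add: P_def)
  have tmul_eq: "tmul x y e = (\<Sum>p | p \<in> P \<and> f p = e. x (fst p) * y (snd p))" for e
  proof -
    have "{(e1, e2). x e1 \<noteq> 0 \<and> y e2 \<noteq> 0 \<and> map2 (*) e1 e2 = e} = {p. p \<in> P \<and> f p = e}"
      by (auto simp: P_def f_def tsupp_def)
    then show ?thesis
      unfolding tmul_def by (simp add: split_def)
  qed
  have "(\<Sum>e\<in>tsupp (tmul x y). tmul x y e * H e) = (\<Sum>e\<in>f ` P. tmul x y e * H e)"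
    using \<open>finite P\<close> tsupp_tmul_subset[of x y] by (intro sum_tsupp_superset) (auto simp: P_def f_def)
  also have "\<dots> = (\<Sum>e\<in>f ` P. \<Sum>p | p \<in> P \<and> f p = e. x (fst p) * y (snd p) * H (f p))"
    unfolding tmul_eq sum_distrib_right by (intro sum.cong refl) auto
  also have "\<dots> = (\<Sum>p\<in>P. x (fst p) * y (snd p) * H (f p))"
    using \<open>finite P\<close> by (intro sum.group) auto
  also have "\<dots> = (\<Sum>e1\<in>tsupp x. \<Sum>e2\<in>tsupp y. x e1 * y e2 * H (map2 (*) e1 e2))"
    unfolding P_def f_def by (simp add: sum.cartesian_product split_def)
  finally show ?thesis .
qed

lemma tstate_left_cong:
  "(\<And>t. t < N \<Longrightarrow> z t = z' t) \<Longrightarrow> tstate_left \<rho> N z x = tstate_left \<rho> N z' x"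
  unfolding tstate_left_def by (intro sum.cong refl arg_cong2[where f = "(*)"] prod.cong) auto

lemma tstate_left_tmul:
  assumes "wf_tensor N x" "wf_tensor N y"
  shows "tstate_left \<rho> N z (tmul x y) = (\<Sum>e\<in>tsupp x. x e * tstate_left \<rho> N (\<lambda>t. z t * e ! t) y)"
proof -
  have "(\<Prod>t<N. \<rho> (z t * map2 (*) e1 e2 ! t)) = (\<Prod>t<N. \<rho> (z t * e1 ! t * e2 ! t))"
    if "e1 \<in> tsupp x" "e2 \<in> tsupp y" for e1 e2
    using that assms by (intro prod.cong) (auto simp: wf_tensor_def mult.assoc)
  then show ?thesis
    using assms unfolding tstate_left_def wf_tensor_def
    by (simp add: sum_tsupp_tmul sum_distrib_left mult.assoc cong: sum.cong)
qed

lemma tstate_left_tmul_assoc: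
  assumes x: "wf_tensor N x" and y: "wf_tensor N y" and w: "wf_tensor N w"
  shows "tstate_left \<rho> N z (tmul (tmul x y) w) = tstate_left \<rho> N z (tmul x (tmul y w))"
proof -
  have inner: "tstate_left \<rho> N (\<lambda>t. z t * map2 (*) e1 e2 ! t) w =
      tstate_left \<rho> N (\<lambda>t. z t * e1 ! t * e2 ! t) w" if "e1 \<in> tsupp x" "e2 \<in> tsupp y" for e1 e2
    using that x y by (intro tstate_left_cong) (auto simp: wf_tensor_def mult.assoc)
  have "tstate_left \<rho> N z (tmul (tmul x y) w) =
      (\<Sum>e\<in>tsupp (tmul x y). tmul x y e * tstate_left \<rho> N (\<lambda>t. z t * e ! t) w)"
    by (rule tstate_left_tmul[OF wf_tensor_tmul[OF x y] w])
  also have "\<dots> = (\<Sum>e1\<in>tsupp x. \<Sum>e2\<in>tsupp y.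
      x e1 * y e2 * tstate_left \<rho> N (\<lambda>t. z t * map2 (*) e1 e2 ! t) w)"
    using x y sum_tsupp_tmul[where H = "\<lambda>e. tstate_left \<rho> N (\<lambda>t. z t * e ! t) w"]
    by (simp add: wf_tensor_def)
  also have "\<dots> = (\<Sum>e1\<in>tsupp x. x e1 * (\<Sum>e2\<in>tsupp y. y e2 *
      tstate_left \<rho> N (\<lambda>t. z t * e1 ! t * e2 ! t) w))"
    by (simp add: inner sum_distrib_left mult.assoc)
  also have "\<dots> = tstate_left \<rho> N z (tmul x (tmul y w))"
    by (simp add: tstate_left_tmul x y w wf_tensor_tmul)
  finally show ?thesis .
qed

lemma tsupp_sum_subset: "tsupp (\<lambda>e. \<Sum>i\<in>I. c i * x i e) \<subseteq> (\<Union>i\<in>I. tsupp (x i))"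
proof
  fix e
  assume "e \<in> tsupp (\<lambda>e. \<Sum>i\<in>I. c i * x i e)"
  then have "(\<Sum>i\<in>I. c i * x i e) \<noteq> 0"
    by (simp add: tsupp_def)
  then obtain i where "i \<in> I" "c i * x i e \<noteq> 0"
    by (rule sum.not_neutral_contains_not_neutral)
  then show "e \<in> (\<Union>i\<in>I. tsupp (x i))"
    by (auto simp: tsupp_def)
qed

lemma wf_tensor_sum:
  assumes "finite I" "\<And>i. i \<in> I \<Longrightarrow> wf_tensor N (x i)"
  shows "wf_tensor N (\<lambda>e. \<Sum>i\<in>I. c i * x i e)"
proof -
  have "tsupp (\<lambda>e. \<Sum>i\<in>I. c i * x i e) \<subseteq> (\<Union>i\<in>I. tsupp (x i))"
    by (rule tsupp_sum_subset)
  then show ?thesis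
    using assms by (auto simp: wf_tensor_def intro: finite_subset)
qed

lemma tstate_left_tmul_sum:
  assumes "finite I" "\<And>i. i \<in> I \<Longrightarrow> wf_tensor N (x i)" "wf_tensor N y"
  shows "tstate_left \<rho> N z (tmul (\<lambda>e. \<Sum>i\<in>I. c i * x i e) y) =
    (\<Sum>i\<in>I. c i * tstate_left \<rho> N z (tmul (x i) y))"
proof -
  define T where "T = (\<Union>i\<in>I. tsupp (x i))"
  define H where "H e = tstate_left \<rho> N (\<lambda>t. z t * e ! t) y" for e
  have "finite T"
    using assms by (auto simp: T_def wf_tensor_def)
  have "tstate_left \<rho> N z (tmul (\<lambda>e. \<Sum>i\<in>I. c i * x i e) y) =
      (\<Sum>e\<in>tsupp (\<lambda>e. \<Sum>i\<in>I. c i * x i e). (\<Sum>i\<in>I. c i * x i e) * H e)"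
    using assms by (simp add: tstate_left_tmul wf_tensor_sum H_def)
  also have "\<dots> = (\<Sum>e\<in>T. (\<Sum>i\<in>I. c i * x i e) * H e)"
    using \<open>finite T\<close> tsupp_sum_subset[of c x I] by (intro sum_tsupp_superset) (auto simp: T_def)
  also have "\<dots> = (\<Sum>e\<in>T. \<Sum>i\<in>I. c i * (x i e * H e))"
    by (simp add: sum_distrib_right mult.assoc)
  also have "\<dots> = (\<Sum>i\<in>I. c i * (\<Sum>e\<in>T. x i e * H e))"
    by (subst sum.swap) (simp add: sum_distrib_left)
  also have "\<dots> = (\<Sum>i\<in>I. c i * (\<Sum>e\<in>tsupp (x i). x i e * H e))"
    using \<open>finite T\<close> by (intro sum.cong refl arg_cong2[where f = "(*)"] sum_tsupp_superset[symmetric])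
      (auto simp: T_def)
  also have "\<dots> = (\<Sum>i\<in>I. c i * tstate_left \<rho> N z (tmul (x i) y))"
    using assms by (simp add: tstate_left_tmul H_def)
  finally show ?thesis .
qed

lemma tbasis_self [simp]: "tbasis e e = 1"
  by (simp add: tbasis_def)

lemma tsupp_tbasis [simp]: "tsupp (tbasis e) = {e}"
  by (auto simp: tsupp_def tbasis_def)

lemma wf_tensor_tbasis: "length e = N \<Longrightarrow> wf_tensor N (tbasis e)"
  by (simp add: wf_tensor_def)

lemma wf_tensor_tunit: "wf_tensor N (tunit N)"
  by (simp add: tunit_def wf_tensor_tbasis)

lemma ttilde_eq_sum: "ttilde N b = (\<lambda>e. \<Sum>t<N. clt_scale N * tbasis ((replicate N 1)[t := b]) e)"
  by (simp add: ttilde_def tscale_def tembed_def clt_scale_def sum_distrib_left)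

lemma wf_tensor_ttilde: "wf_tensor N (ttilde N b)"
  unfolding ttilde_eq_sum by (intro wf_tensor_sum wf_tensor_tbasis) auto

lemma wf_tensor_tprod_list: "\<forall>x\<in>set xs. wf_tensor N x \<Longrightarrow> wf_tensor N (tprod_list N xs)"
  unfolding tprod_list_def by (induction xs) (auto intro: wf_tensor_tmul wf_tensor_tunit)

lemma tstate_left_tmul_tunit:
  assumes "wf_tensor N y"
  shows "tstate_left \<rho> N z (tmul (tunit N) y) = tstate_left \<rho> N z y"
proof -
  have "tstate_left \<rho> N z (tmul (tunit N) y) = tstate_left \<rho> N (\<lambda>t. z t * replicate N 1 ! t) y"
    using tstate_left_tmul[OF wf_tensor_tunit assms, of \<rho> z] by (simp add: tunit_def)
  also have "\<dots> = tstate_left \<rho> N z y"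
    by (rule tstate_left_cong) simp
  finally show ?thesis .
qed

lemma tstate_left_tmul_ttilde:
  assumes "wf_tensor N y"
  shows "tstate_left \<rho> N z (tmul (ttilde N b) y) =
    clt_scale N * (\<Sum>t<N. tstate_left \<rho> N (z(t := z t * b)) y)"
proof -
  have "tstate_left \<rho> N z (tmul (ttilde N b) y) =
      (\<Sum>t<N. clt_scale N * tstate_left \<rho> N (\<lambda>t'. z t' * (replicate N 1)[t := b] ! t') y)"
    unfolding ttilde_eq_sum using assms
    by (simp add: tstate_left_tmul_sum wf_tensor_tbasis tstate_left_tmul)
  also have "\<dots> = (\<Sum>t<N. clt_scale N * tstate_left \<rho> N (z(t := z t * b)) y)"
    by (intro sum.cong refl arg_cong2[where f = "(*)"] tstate_left_cong) (auto simp: nth_list_update)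
  finally show ?thesis
    by (simp add: sum_distrib_left)
qed

lemma tstate_left_tmul_tprod_list:
  assumes "wf_tensor N y"
  shows "tstate_left \<rho> N z (tmul (tprod_list N (map (ttilde N) bs)) y) =
    clt_scale N ^ length bs * slot_sum N bs z (\<lambda>z'. tstate_left \<rho> N z' y)"
proof (induction bs arbitrary: z)
  case Nil
  show ?case
    using assms by (simp add: tprod_list_def tstate_left_tmul_tunit)
next
  case (Cons b bs)
  have wf: "wf_tensor N (tprod_list N (map (ttilde N) bs))"
    by (intro wf_tensor_tprod_list) (simp add: wf_tensor_ttilde)
  have "tstate_left \<rho> N z (tmul (tprod_list N (map (ttilde N) (b # bs))) y) =
      tstate_left \<rho> N z (tmul (ttilde N b) (tmul (tprod_list N (map (ttilde N) bs)) y))"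
    using wf assms by (simp add: tprod_list_def tstate_left_tmul_assoc wf_tensor_ttilde)
  also have "\<dots> = clt_scale N * (\<Sum>t<N. tstate_left \<rho> N (z(t := z t * b)) (tmul (tprod_list N (map (ttilde N) bs)) y))"
    using wf assms by (simp add: tstate_left_tmul_ttilde wf_tensor_tmul)
  also have "\<dots> = clt_scale N ^ length (b # bs) * slot_sum N (b # bs) z (\<lambda>z'. tstate_left \<rho> N z' y)"
    by (simp only: Cons.IH slot_sum.simps length_Cons power_Suc sum_distrib_left mult.assoc)
  finally show ?case .
qed

lemma tstate_eq_tstate_left: "wf_tensor N x \<Longrightarrow> tstate \<rho> x = tstate_left \<rho> N (\<lambda>_. 1) x"
  unfolding tstate_def tstate_left_def wf_tensor_def tsupp_def
  by (intro sum.cong refl arg_cong2[where f = "(*)"]) (auto simp: prod_list_map_conv_prod_nth)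

lemma slot_sum_mult_right: "slot_sum N bs z (\<lambda>z'. c * K z') = c * slot_sum N bs z K"
proof (induction bs arbitrary: z)
  case (Cons b bs)
  show ?case
    by (simp only: slot_sum.simps Cons.IH sum_distrib_left)
qed simp

lemma of_real_prod_list:
  "prod_list (map (\<lambda>a. complex_of_real (f a)) xs) = complex_of_real (prod_list (map f xs))"
  by (induction xs) auto

lemma wf_tensor_teval: "(\<And>a. wf_tensor N (B a)) \<Longrightarrow> wf_tensor N (teval N p B)"
  unfolding teval_def by (intro wf_tensor_sum wf_tensor_tprod_list) auto

lemma wf_tensor_tpow: "wf_tensor N x \<Longrightarrow> wf_tensor N (tpow N x n)"
  unfolding tpow_def by (induction n) (auto intro: wf_tensor_tmul wf_tensor_tunit)

context unital_additive
begin

lemma tstate_left_tmul_teval: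
  assumes "wf_tensor N y"
  shows "tstate_left \<rho> N z (tmul (teval N p (\<lambda>a. ttilde N (A a))) y) =
    (\<Sum>w\<in>Poly_Mapping.keys p. Poly_Mapping.lookup p w *
      (clt_scale N ^ length w * slot_sum N (map A w) z (\<lambda>z'. tstate_left \<rho> N z' y)))"
proof -
  have "map (\<lambda>a. ttilde N (A a)) w = map (ttilde N) (map A w)" for w
    by simp
  then show ?thesis
    unfolding teval_def using assms
    by (simp add: tstate_left_tmul_sum wf_tensor_tprod_list wf_tensor_ttilde tstate_left_tmul_tprod_list
        del: map_map)
qed

lemma tstate_left_tpow_teval:
  "tstate_left \<rho> N z (tpow N (teval N p (\<lambda>a. ttilde N (A a))) n) =
    (\<Sum>ws\<in>words (Poly_Mapping.keys p) n. prod_list (map (Poly_Mapping.lookup p) ws) *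
      (clt_scale N ^ length (concat ws) * slot_moment \<rho> N (map A (concat ws)) z))"
proof (induction n arbitrary: z)
  case 0
  show ?case
    by (simp add: tpow_def tunit_def tstate_left_def slot_moment_def)
next
  case (Suc n)
  define x where "x = teval N p (\<lambda>a. ttilde N (A a))"
  have wf: "wf_tensor N (tpow N x n)"
    unfolding x_def by (intro wf_tensor_tpow wf_tensor_teval wf_tensor_ttilde)
  have "tstate_left \<rho> N z (tpow N x (Suc n)) = tstate_left \<rho> N z (tmul x (tpow N x n))"
    by (simp add: tpow_def)
  also have "\<dots> = (\<Sum>w\<in>Poly_Mapping.keys p. \<Sum>ws\<in>words (Poly_Mapping.keys p) n.
      Poly_Mapping.lookup p w * prod_list (map (Poly_Mapping.lookup p) ws) *
      (clt_scale N ^ length (concat (w # ws)) * slot_moment \<rho> N (map A (concat (w # ws))) z))"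
    unfolding x_def tstate_left_tmul_teval[OF wf[unfolded x_def]] Suc.IH slot_moment_def
    by (simp add: slot_sum_sum_right slot_sum_mult_right slot_sum_append sum_distrib_left power_add ac_simps)
  also have "\<dots> = (\<Sum>ws\<in>words (Poly_Mapping.keys p) (Suc n).
      prod_list (map (Poly_Mapping.lookup p) ws) *
      (clt_scale N ^ length (concat ws) * slot_moment \<rho> N (map A (concat ws)) z))"
    by (simp add: sum_words_Suc)
  finally show ?case
    by (simp add: x_def)
qed

lemma tendsto_tstate_tpow_teval:
  assumes "\<forall>w\<in>Poly_Mapping.keys p. set w \<subseteq> {..<k}" and "\<forall>a<k. \<rho> (A a) = 0"
  shows "(\<lambda>N. tstate \<rho> (tpow N (teval N p (\<lambda>a. ttilde N (A a))) n)) \<longlonglongrightarrow>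
    (\<Sum>ws\<in>words (Poly_Mapping.keys p) n. prod_list (map (Poly_Mapping.lookup p) ws) *
      clt_moment \<rho> (map A (concat ws)))"
proof -
  have "tstate \<rho> (tpow N (teval N p (\<lambda>a. ttilde N (A a))) n) =
      (\<Sum>ws\<in>words (Poly_Mapping.keys p) n. prod_list (map (Poly_Mapping.lookup p) ws) *
        (clt_scale N ^ length (map A (concat ws)) * slot_moment \<rho> N (map A (concat ws)) (\<lambda>_. 1)))" for N
    by (simp add: tstate_eq_tstate_left[where N = N] wf_tensor_tpow wf_tensor_teval wf_tensor_ttilde
        tstate_left_tpow_teval)
  moreover have "\<forall>b\<in>set (map A (concat ws)). \<rho> b = 0" if "ws \<in> words (Poly_Mapping.keys p) n" for ws
    using that assms by (auto simp: words_def)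
  ultimately show ?thesis
    by (simp only:) (intro tendsto_sum tendsto_mult tendsto_const tendsto_clt_moment[where \<rho> = \<rho>, OF unital])
qed

end

section \<open>The commutative image and the main theorem\<close>

lemma ceval_comm_image:
  "ceval (comm_image p) Y = (\<Sum>w\<in>Poly_Mapping.keys p. Poly_Mapping.lookup p w * prod_list (map Y w))"
proof -
  have "{m. comm_image p m \<noteq> 0} \<subseteq> mset ` Poly_Mapping.keys p"
    by (auto simp: comm_image_def elim: sum.not_neutral_contains_not_neutral)
  then have "ceval (comm_image p) Y = (\<Sum>m\<in>mset ` Poly_Mapping.keys p. comm_image p m * (\<Prod>a\<in>#m. Y a))"
    unfolding ceval_def by (intro sum.mono_neutral_left) auto
  also have "\<dots> = (\<Sum>m\<in>mset ` Poly_Mapping.keys p. \<Sum>w | w \<in> Poly_Mapping.keys p \<and> mset w = m.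
      Poly_Mapping.lookup p w * prod_list (map Y w))"
    unfolding comm_image_def sum_distrib_right
    by (intro sum.cong refl) (simp add: prod_mset_prod_list flip: mset_map)
  also have "\<dots> = (\<Sum>w\<in>Poly_Mapping.keys p. Poly_Mapping.lookup p w * prod_list (map Y w))"
    by (intro sum.group) auto
  finally show ?thesis .
qed

lemma ceval_comm_image_power:
  "ceval (comm_image p) Y ^ n = (\<Sum>ws\<in>words (Poly_Mapping.keys p) n.
    prod_list (map (Poly_Mapping.lookup p) ws) * prod_list (map Y (concat ws)))"
proof -
  have "prod_list (map (\<lambda>w. Poly_Mapping.lookup p w * prod_list (map Y w)) ws) =
      prod_list (map (Poly_Mapping.lookup p) ws) * prod_list (map Y (concat ws))" for ws
    by (induction ws) (simp_all add: ac_simps)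
  then show ?thesis
    by (simp add: ceval_comm_image power_sum_eq_sum_words)
qed

context centered_gaussian_family
begin

lemma integral_ceval_power:
  assumes "unital_additive \<rho>"
    and vars: "\<forall>w\<in>Poly_Mapping.keys p. set w \<subseteq> {..<k}"
    and "\<forall>a<k. \<rho> (A a) = 0"
    and "\<forall>a<k. \<forall>b<k. \<rho> (A a * A b) = \<rho> (A b * A a)"
    and "\<forall>a<k. \<forall>b<k. complex_of_real (integral\<^sup>L M (\<lambda>x. X a x * X b x)) = \<rho> (A a * A b)"
  shows "integral\<^sup>L M (\<lambda>x. ceval (comm_image p) (\<lambda>a. complex_of_real (X a x)) ^ n) =
    (\<Sum>ws\<in>words (Poly_Mapping.keys p) n. prod_list (map (Poly_Mapping.lookup p) ws) *
      clt_moment \<rho> (map A (concat ws)))"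
proof -
  have vars_ws: "set (concat ws) \<subseteq> {..<k}" if "ws \<in> words (Poly_Mapping.keys p) n" for ws
    using that vars by (auto simp: words_def)
  have "integrable M (\<lambda>x. prod_list (map (\<lambda>a. X a x) (concat ws)))"
    if "ws \<in> words (Poly_Mapping.keys p) n" for ws
    using integral_prod_polarization(1)[OF vars_ws[OF that]] by (simp add: prod_list_map_conv_prod_nth)
  moreover have "ceval (comm_image p) (\<lambda>a. complex_of_real (X a x)) ^ n =
      (\<Sum>ws\<in>words (Poly_Mapping.keys p) n. prod_list (map (Poly_Mapping.lookup p) ws) *
        complex_of_real (prod_list (map (\<lambda>a. X a x) (concat ws))))" for x
    by (simp add: ceval_comm_image_power of_real_prod_list)
  ultimately have "integral\<^sup>L M (\<lambda>x. ceval (comm_image p) (\<lambda>a. complex_of_real (X a x)) ^ n) =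
      (\<Sum>ws\<in>words (Poly_Mapping.keys p) n. prod_list (map (Poly_Mapping.lookup p) ws) *
        complex_of_real (integral\<^sup>L M (\<lambda>x. prod_list (map (\<lambda>a. X a x) (concat ws)))))"
    by (simp add: integral_sum)
  also have "\<dots> = (\<Sum>ws\<in>words (Poly_Mapping.keys p) n. prod_list (map (Poly_Mapping.lookup p) ws) *
      clt_moment \<rho> (map A (concat ws)))"
    using assms vars_ws by (simp add: integral_prod_eq_clt_moment)
  finally show ?thesis .
qed

end

theorem theorem2:
  fixes sm :: "complex \<Rightarrow> 'a::ring_1 \<Rightarrow> 'a"
    and st :: "'a \<Rightarrow> 'a"
    and \<rho> :: "'a \<Rightarrow> complex"
    and k :: nat
    and A :: "nat \<Rightarrow> 'a"
    and p :: ncpoly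
    and M :: "'b measure"
    and X :: "nat \<Rightarrow> 'b \<Rightarrow> real"
    and n :: nat
  assumes alg: "star_algebra sm st"
    and state: "is_state sm st \<rho>"
    and selfadj: "\<forall>a<k. st (A a) = A a"
    and centered: "\<forall>a<k. \<rho> (A a) = 0"
    and comm2: "\<forall>a<k. \<forall>b<k. \<rho> (A a * A b) = \<rho> (A b * A a)"
    and vars: "\<forall>w \<in> Poly_Mapping.keys p. set w \<subseteq> {..<k}"
    and prob: "prob_space M"
    and gauss: "jointly_centered_gaussian M k X"
    and cov: "\<forall>a<k. \<forall>b<k. complex_of_real (integral\<^sup>L M (\<lambda>x. X a x * X b x)) = \<rho> (A a * A b)"
  shows "(\<lambda>N. tstate \<rho> (tpow N (teval N p (\<lambda>a. ttilde N (A a))) n))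
           \<longlonglongrightarrow> integral\<^sup>L M (\<lambda>x. (ceval (comm_image p) (\<lambda>a. complex_of_real (X a x))) ^ n)"
proof -
  have "unital_additive \<rho>"
    using state by unfold_locales (simp_all add: is_state_def)
  then interpret unital_additive \<rho> .
  have "centered_gaussian_family M k X"
    using prob gauss by (simp add: centered_gaussian_family_def centered_gaussian_family_axioms_def)
  then interpret centered_gaussian_family M k X .
  show ?thesis
    using tendsto_tstate_tpow_teval[OF vars centered]
      integral_ceval_power[OF \<open>unital_additive \<rho>\<close> vars centered comm2 cov]
    by simp
qed

end
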